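(* (Simulation.) For all expressions $e, e'$ and every natural number $n$: if $e\Rightarrow^{n} e'$, then $|e|\mapsto^{*}|e'|$.
   Context: This concerns the "filtered stepper calculus". Syntax: actions $a ::= \mathsf{skip} \mid \mathsf{step}$; gas $g ::= \mathsf{one} \mid \mathsf{all}$; priorities $l \in \mathbb{N}$. Patterns $p ::= x \mid p(p) \mid \lambda x.p \mid p+p \mid \underline{n} \mid \$e \mid \$v$. A filter is a triple $f=(p,a,g)$. Expressions $e ::= x \mid e(e) \mid \lambda x.e \mid \mathrm{fix}\,x.e \mid e+e \mid \underline{n} \mid \mathrm{filter}_f(e) \mid \langle e\rangle^{a,g,l}$ (the last is called a residue), taken up to $\alpha$-equivalence; $\underline{n}$ ranges over numerals. Evaluation contexts $\mathcal{E} ::= \circ \mid \mathcal{E}(e) \mid e(\mathcal{E}) \mid \mathcal{E}+e \mid e+\mathcal{E} \mid \mathrm{filter}_f(\mathcal{E}) \mid \langle \mathcal{E}\rangle^{a,g,l}$, with exactly one hole; $\mathcal{E}[e]$ is the result of plugging $e$ into the hole. The values are exactly $\lambda x.e$ and numerals $\underline{n}$ (fixpoints, filters and residues are never values). Substitution $[v/x]e$ is standard capture-avoiding substitution, which passes through residues unchanged, through filters (substituting also into the filter's pattern), and stops at binders $\lambda x$ and $\mathrm{fix}\,x$ of the same variable. Stripping $|e|$ erases all filter and residue wrappers recursively: $|\mathrm{filter}_f(e)|=|e|$, $|\langle e\rangle^{a,g,l}|=|e|$, and $|\cdot|$ commutes with all other constructors. Matching $p \triangleright e$ is defined inductively: $\$e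 \triangleright e$ for all $e$; $\$v \triangleright v$ for every value $v$; $\underline{n}\triangleright\underline{n}$; $\lambda x_1.e_1 \triangleright \lambda x_2.e_2$ if $|e_1| \equiv_\alpha |e_2|$; $\mathrm{fix}\,x_1.e_1 \triangleright \mathrm{fix}\,x_2.e_2$ if $|e_1|\equiv_\alpha |e_2|$; $p_1(p_2)\triangleright e_1(e_2)$ if $p_1\triangleright e_1$ and $p_2\triangleright e_2$; $p_1+p_2\triangleright e_1+e_2$ likewise; there are no other rules. Instrumentation $e \to_{p,a,g,l} e'$ is the inductively defined relation: values and variables and $\mathrm{fix}\,x.e$ are left unchanged; $\langle e_0\rangle^{a',g',l'} \to_{p,a,g,l} \langle e\rangle^{a',g',l'}$ if $e_0\to_{p,a,g,l} e$; $\mathrm{filter}_{(p',a',g')}(e_0)\to_{p,a,g,l}\mathrm{filter}_{(p',a',g')}(e')$ if $e_0\to_{p,a,g,l} e$ and $e \to_{p',a',g',l+1} e'$; for $e_1(e_2)$, if $e_1\to_{p,a,g,l} e_1'$ and $e_2\to_{p,a,g,l} e_2'$ then $e_1(e_2)\to_{p,a,g,l}\langle e_1'(e_2')\rangle^{a,g,l}$ when $p\triangleright e_1(e_2)$ and $e_1(e_2)\to_{p,a,g,l} e_1'(e_2')$ when not; identically for $e_1+e_2$. Decomposition $e = \mathcal{E}[e_0]$ (with $e_0$ a redex) is the non-deterministic relation: $\langle v\rangle^{a,g,l}$ and $\mathrm{filter}_f(v)$ with $v$ a value decompose as hole $\circ$ with redex themselves; if $e$ decomposes as $\mathcal{E}$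 and $e_0$ then $\langle e\rangle^{a,g,l}$ decomposes as $\langle\mathcal{E}\rangle^{a,g,l}$ and $e_0$, and $\mathrm{filter}_f(e)$ as $\mathrm{filter}_f(\mathcal{E})$ and $e_0$; $e_1(e_2)$ decomposes as $\mathcal{E}_1(e_2)$ if $e_1$ decomposes as $\mathcal{E}_1$, as $e_1(\mathcal{E}_2)$ if $e_1$ is a value and $e_2$ decomposes as $\mathcal{E}_2$, and as $\circ$ with redex $e_1(e_2)$ if both are values; identically for $e_1+e_2$; $\mathrm{fix}\,x.e$ decomposes as $\circ$ with redex itself. Instruction transitions $e_0 \to e'$: $(\lambda x.e_1)(v)\to [v/x]e_1$ for a value $v$; $\underline{n_1}+\underline{n_2}\to\underline{n_1+n_2}$; $\mathrm{fix}\,x.e\to[\mathrm{fix}\,x.e/x]e$; $\langle v\rangle^{a,g,l}\to v$ and $\mathrm{filter}_f(v)\to v$ for a value $v$. Decay ${\downarrow}\mathcal{E}$ recursively removes every residue with gas $\mathsf{one}$ (replacing $\langle e\rangle^{a,\mathsf{one},l}$ by the decay of $e$), keeps residues with gas $\mathsf{all}$ and filters, applies recursively to all subterms, and maps the hole to the hole. Action selection $(a,l)\vdash\mathcal{E}\Downarrow a'$: $(a,l)\vdash\circ\Downarrow a$; for context nodes of the form application, addition or filter, the judgment passes unchanged into the subcontext containing the hole; $(a_0,l_0)\vdash\langle\mathcal{E}\rangle^{a,g,l}\Downarrow a'$ holds if either $l\le l_0$ and $(a_0,l_0)\vdash\mathcal{E}\Downarrow a'$, or $l>l_0$ and $(a,l)\vdash\mathcal{E}\Downarrow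 a'$. An expression is strippable if it has the form $\mathrm{filter}_f(e)$ or $\langle e\rangle^{a,g,l}$. Filtered stepping $e\Rightarrow^n e'$ is defined inductively: (i) $v\Rightarrow^0 v$ for every value $v$; (ii) if $e\to_{\$e,\mathsf{step},\mathsf{one},0} e_i$, $e_i=\mathcal{E}_0[e_0]$ (decomposition), $e_0\to e_t$, $e_1=({\downarrow}\mathcal{E}_0)[e_t]$, $(\mathsf{step},0)\vdash\mathcal{E}_0\Downarrow\mathsf{step}$ and $e_0$ is not strippable, then $e\Rightarrow^1 e_1$; (iii) with $e_i,\mathcal{E}_0,e_0,e_t,e_1$ as in (ii), if $(\mathsf{step},0)\vdash\mathcal{E}_0\Downarrow\mathsf{skip}$ and $e_1\Rightarrow^n e_2$, then $e\Rightarrow^{n+1}e_2$; (iv) with the same data, if $e_0$ is strippable and $e_1\Rightarrow^n e_2$, then $e\Rightarrow^{n+1}e_2$. Unfiltered step: $e\mapsto e'$ holds if $e=\mathcal{E}_0[e_0]$ is a decomposition, $e_0\to e_0'$, and $e'=\mathcal{E}_0[e_0']$. $\mapsto^{*}$ is its reflexive–transitive closure ($e\mapsto^* e$; and $e\mapsto e_1$, $e_1\mapsto^* e'$ imply $e\mapsto^* e'$). *)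

theory Defs
  imports Main
begin

section \<open>Syntax (de Bruijn indices, so alpha-equivalent terms are equal)\<close>

datatype act = Skip | Step
datatype gas = One | All

text \<open>A single term type is used for expressions and patterns.  Patterns additionally
use the constructors AnyE (the pattern \$e) and AnyV (the pattern \$v).
A filter f = (p,a,g) is stored inline: Filter p a g e is filter_(p,a,g)(e).
Resid e a g l is the residue <e>^{a,g,l}.\<close>

datatype tm =
    Var nat
  | App tm tm
  | Lam tm
  | Fix tm
  | Plus tm tm
  | Num nat
  | Filter tm act gas tm
  | Resid tm act gas nat
  | AnyE
  | AnyV

fun is_expr :: "tm \<Rightarrow> bool" where
  "is_expr (Var x) = True"
| "is_expr (App e1 e2) = (is_expr e1 \<and> is_expr e2)"
| "is_expr (Lam e) = is_expr e"
| "is_expr (Fix e) = is_expr e"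
| "is_expr (Plus e1 e2) = (is_expr e1 \<and> is_expr e2)"
| "is_expr (Num n) = True"
| "is_expr (Filter p a g e) = is_expr e"
| "is_expr (Resid e a g l) = is_expr e"
| "is_expr AnyE = False"
| "is_expr AnyV = False"

fun is_val :: "tm \<Rightarrow> bool" where
  "is_val (Lam e) = True"
| "is_val (Num n) = True"
| "is_val _ = False"

fun lift :: "tm \<Rightarrow> nat \<Rightarrow> tm" where
  "lift (Var i) k = (if i < k then Var i else Var (Suc i))"
| "lift (App s t) k = App (lift s k) (lift t k)"
| "lift (Lam t) k = Lam (lift t (Suc k))"
| "lift (Fix t) k = Fix (lift t (Suc k))"
| "lift (Plus s t) k = Plus (lift s k) (lift t k)"
| "lift (Num n) k = Num n"
| "lift (Filter p a g t) k = Filter (lift p k) a g (lift t k)"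
| "lift (Resid t a g l) k = Resid (lift t k) a g l"
| "lift AnyE k = AnyE"
| "lift AnyV k = AnyV"

fun subst :: "tm \<Rightarrow> nat \<Rightarrow> tm \<Rightarrow> tm" where
  "subst (Var i) k u = (if k < i then Var (i - 1) else if i = k then u else Var i)"
| "subst (App s t) k u = App (subst s k u) (subst t k u)"
| "subst (Lam t) k u = Lam (subst t (Suc k) (lift u 0))"
| "subst (Fix t) k u = Fix (subst t (Suc k) (lift u 0))"
| "subst (Plus s t) k u = Plus (subst s k u) (subst t k u)"
| "subst (Num n) k u = Num n"
| "subst (Filter p a g t) k u = Filter (subst p k u) a g (subst t k u)"
| "subst (Resid t a g l) k u = Resid (subst t k u) a g l"
| "subst AnyE k u = AnyE"
| "subst AnyV k u = AnyV"

fun strip :: "tm \<Rightarrow> tm" where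
  "strip (Var i) = Var i"
| "strip (App s t) = App (strip s) (strip t)"
| "strip (Lam t) = Lam (strip t)"
| "strip (Fix t) = Fix (strip t)"
| "strip (Plus s t) = Plus (strip s) (strip t)"
| "strip (Num n) = Num n"
| "strip (Filter p a g t) = strip t"
| "strip (Resid t a g l) = strip t"
| "strip AnyE = AnyE"
| "strip AnyV = AnyV"

inductive matches :: "tm \<Rightarrow> tm \<Rightarrow> bool" where
  m_anye: "matches AnyE e"
| m_anyv: "is_val v \<Longrightarrow> matches AnyV v"
| m_num: "matches (Num n) (Num n)"
| m_lam: "strip e1 = strip e2 \<Longrightarrow> matches (Lam e1) (Lam e2)"
| m_fix: "strip e1 = strip e2 \<Longrightarrow> matches (Fix e1) (Fix e2)"
| m_app: "matches p1 e1 \<Longrightarrow> matches p2 e2 \<Longrightarrow> matches (App p1 p2) (App e1 e2)"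
| m_plus: "matches p1 e1 \<Longrightarrow> matches p2 e2 \<Longrightarrow> matches (Plus p1 p2) (Plus e1 e2)"

section \<open>Instrumentation: instr p a g l e e' is  e \<rightarrow>_{p,a,g,l} e'\<close>

inductive instr :: "tm \<Rightarrow> act \<Rightarrow> gas \<Rightarrow> nat \<Rightarrow> tm \<Rightarrow> tm \<Rightarrow> bool" where
  i_val: "is_val v \<Longrightarrow> instr p a g l v v"
| i_var: "instr p a g l (Var x) (Var x)"
| i_fix: "instr p a g l (Fix e) (Fix e)"
| i_resid: "instr p a g l e0 e \<Longrightarrow> instr p a g l (Resid e0 a' g' l') (Resid e a' g' l')"
| i_filter: "instr p a g l e0 e \<Longrightarrow> instr p' a' g' (Suc l) e e'
     \<Longrightarrow> instr p a g l (Filter p' a' g' e0) (Filter p' a' g' e')"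
| i_app_m: "instr p a g l e1 e1' \<Longrightarrow> instr p a g l e2 e2' \<Longrightarrow> matches p (App e1 e2)
     \<Longrightarrow> instr p a g l (App e1 e2) (Resid (App e1' e2') a g l)"
| i_app_n: "instr p a g l e1 e1' \<Longrightarrow> instr p a g l e2 e2' \<Longrightarrow> \<not> matches p (App e1 e2)
     \<Longrightarrow> instr p a g l (App e1 e2) (App e1' e2')"
| i_plus_m: "instr p a g l e1 e1' \<Longrightarrow> instr p a g l e2 e2' \<Longrightarrow> matches p (Plus e1 e2)
     \<Longrightarrow> instr p a g l (Plus e1 e2) (Resid (Plus e1' e2') a g l)"
| i_plus_n: "instr p a g l e1 e1' \<Longrightarrow> instr p a g l e2 e2' \<Longrightarrow> \<not> matches p (Plus e1 e2)
     \<Longrightarrow> instr p a g l (Plus e1 e2) (Plus e1' e2')"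

datatype ctx =
    Hole
  | CAppL ctx tm
  | CAppR tm ctx
  | CPlusL ctx tm
  | CPlusR tm ctx
  | CFilter tm act gas ctx
  | CResid ctx act gas nat

fun plug :: "ctx \<Rightarrow> tm \<Rightarrow> tm" where
  "plug Hole e = e"
| "plug (CAppL E e2) e = App (plug E e) e2"
| "plug (CAppR e1 E) e = App e1 (plug E e)"
| "plug (CPlusL E e2) e = Plus (plug E e) e2"
| "plug (CPlusR e1 E) e = Plus e1 (plug E e)"
| "plug (CFilter p a g E) e = Filter p a g (plug E e)"
| "plug (CResid E a g l) e = Resid (plug E e) a g l"

inductive decomp :: "tm \<Rightarrow> ctx \<Rightarrow> tm \<Rightarrow> bool" where
  d_resid_v: "is_val v \<Longrightarrow> decomp (Resid v a g l) Hole (Resid v a g l)"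
| d_filter_v: "is_val v \<Longrightarrow> decomp (Filter p a g v) Hole (Filter p a g v)"
| d_resid: "decomp e E e0 \<Longrightarrow> decomp (Resid e a g l) (CResid E a g l) e0"
| d_filter: "decomp e E e0 \<Longrightarrow> decomp (Filter p a g e) (CFilter p a g E) e0"
| d_appL: "decomp e1 E1 e0 \<Longrightarrow> decomp (App e1 e2) (CAppL E1 e2) e0"
| d_appR: "is_val e1 \<Longrightarrow> decomp e2 E2 e0 \<Longrightarrow> decomp (App e1 e2) (CAppR e1 E2) e0"
| d_app: "is_val e1 \<Longrightarrow> is_val e2 \<Longrightarrow> decomp (App e1 e2) Hole (App e1 e2)"
| d_plusL: "decomp e1 E1 e0 \<Longrightarrow> decomp (Plus e1 e2) (CPlusL E1 e2) e0"
| d_plusR: "is_val e1 \<Longrightarrow> decomp e2 E2 e0 \<Longrightarrow> decomp (Plus e1 e2) (CPlusR e1 E2) e0"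
| d_plus: "is_val e1 \<Longrightarrow> is_val e2 \<Longrightarrow> decomp (Plus e1 e2) Hole (Plus e1 e2)"
| d_fix: "decomp (Fix e) Hole (Fix e)"

inductive instr_step :: "tm \<Rightarrow> tm \<Rightarrow> bool" where
  s_beta: "is_val v \<Longrightarrow> instr_step (App (Lam e) v) (subst e 0 v)"
| s_plus: "instr_step (Plus (Num n1) (Num n2)) (Num (n1 + n2))"
| s_fix: "instr_step (Fix e) (subst e 0 (Fix e))"
| s_resid: "is_val v \<Longrightarrow> instr_step (Resid v a g l) v"
| s_filter: "is_val v \<Longrightarrow> instr_step (Filter p a g v) v"

fun decay_tm :: "tm \<Rightarrow> tm" where
  "decay_tm (Var i) = Var i"
| "decay_tm (App s t) = App (decay_tm s) (decay_tm t)"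
| "decay_tm (Lam t) = Lam (decay_tm t)"
| "decay_tm (Fix t) = Fix (decay_tm t)"
| "decay_tm (Plus s t) = Plus (decay_tm s) (decay_tm t)"
| "decay_tm (Num n) = Num n"
| "decay_tm (Filter p a g t) = Filter (decay_tm p) a g (decay_tm t)"
| "decay_tm (Resid t a g l) = (if g = One then decay_tm t else Resid (decay_tm t) a g l)"
| "decay_tm AnyE = AnyE"
| "decay_tm AnyV = AnyV"

fun decay :: "ctx \<Rightarrow> ctx" where
  "decay Hole = Hole"
| "decay (CAppL E e) = CAppL (decay E) (decay_tm e)"
| "decay (CAppR e E) = CAppR (decay_tm e) (decay E)"
| "decay (CPlusL E e) = CPlusL (decay E) (decay_tm e)"
| "decay (CPlusR e E) = CPlusR (decay_tm e) (decay E)"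
| "decay (CFilter p a g E) = CFilter (decay_tm p) a g (decay E)"
| "decay (CResid E a g l) = (if g = One then decay E else CResid (decay E) a g l)"

text \<open>sel a l E a' is  (a,l) |- E \<Down> a'.\<close>
inductive sel :: "act \<Rightarrow> nat \<Rightarrow> ctx \<Rightarrow> act \<Rightarrow> bool" where
  sel_hole: "sel a l Hole a"
| sel_appL: "sel a l E a' \<Longrightarrow> sel a l (CAppL E e) a'"
| sel_appR: "sel a l E a' \<Longrightarrow> sel a l (CAppR e E) a'"
| sel_plusL: "sel a l E a' \<Longrightarrow> sel a l (CPlusL E e) a'"
| sel_plusR: "sel a l E a' \<Longrightarrow> sel a l (CPlusR e E) a'"
| sel_filter: "sel a l E a' \<Longrightarrow> sel a l (CFilter p ag gg E) a'"
| sel_resid_le: "l \<le> l0 \<Longrightarrow> sel a0 l0 E a' \<Longrightarrow> sel a0 l0 (CResid E a g l) a'"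
| sel_resid_gt: "l > l0 \<Longrightarrow> sel a l E a' \<Longrightarrow> sel a0 l0 (CResid E a g l) a'"

fun strippable :: "tm \<Rightarrow> bool" where
  "strippable (Filter p a g e) = True"
| "strippable (Resid e a g l) = True"
| "strippable _ = False"

section \<open>Filtered stepping: fstep e n e' is  e \<Rightarrow>^n e'\<close>

inductive fstep :: "tm \<Rightarrow> nat \<Rightarrow> tm \<Rightarrow> bool" where
  f_val: "is_val v \<Longrightarrow> fstep v 0 v"
| f_step: "instr AnyE Step One 0 e ei \<Longrightarrow> decomp ei E0 e0 \<Longrightarrow> instr_step e0 et
     \<Longrightarrow> e1 = plug (decay E0) et \<Longrightarrow> sel Step 0 E0 Step \<Longrightarrow> \<not> strippable e0
     \<Longrightarrow> fstep e 1 e1"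
| f_skip: "instr AnyE Step One 0 e ei \<Longrightarrow> decomp ei E0 e0 \<Longrightarrow> instr_step e0 et
     \<Longrightarrow> e1 = plug (decay E0) et \<Longrightarrow> sel Step 0 E0 Skip \<Longrightarrow> fstep e1 n e2
     \<Longrightarrow> fstep e (Suc n) e2"
| f_strip: "instr AnyE Step One 0 e ei \<Longrightarrow> decomp ei E0 e0 \<Longrightarrow> instr_step e0 et
     \<Longrightarrow> e1 = plug (decay E0) et \<Longrightarrow> strippable e0 \<Longrightarrow> fstep e1 n e2
     \<Longrightarrow> fstep e (Suc n) e2"

definition ustep :: "tm \<Rightarrow> tm \<Rightarrow> bool" where
  "ustep e e' \<longleftrightarrow> (\<exists>E e0 e0'. decomp e E e0 \<and> instr_step e0 e0' \<and> e' = plug E e0')"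

end

theory Submission
  imports Defs
begin

text \<open>Instrumentation and decay only insert or delete filter and residue wrappers, so they
are invisible after stripping.  A filtered step whose redex is a wrapper around a value
merely removes that wrapper and leaves the stripped term unchanged; any other filtered step
contracts an ordinary redex, and stripping the decomposition yields a decomposition of the
stripped term at the stripped redex, so the stripped terms perform one unfiltered step.\<close>

fun strip_ctx :: "ctx \<Rightarrow> ctx" where
  "strip_ctx Hole = Hole"
| "strip_ctx (CAppL E e) = CAppL (strip_ctx E) (strip e)"
| "strip_ctx (CAppR e E) = CAppR (strip e) (strip_ctx E)"
| "strip_ctx (CPlusL E e) = CPlusL (strip_ctx E) (strip e)"
| "strip_ctx (CPlusR e E) = CPlusR (strip e) (strip_ctx E)"
| "strip_ctx (CFilter p a g E) = strip_ctx E"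
| "strip_ctx (CResid E a g l) = strip_ctx E"

lemma strip_plug: "strip (plug E e) = plug (strip_ctx E) (strip e)"
  by (induction E) auto

lemma strip_decay_tm: "strip (decay_tm t) = strip t"
  by (induction t) auto

lemma strip_plug_decay: "strip (plug (decay E) e) = strip (plug E e)"
  by (induction E) (auto simp: strip_decay_tm)

lemma strip_instr: "instr p a g l e e' \<Longrightarrow> strip e' = strip e"
  by (induction rule: instr.induct) auto

lemma plug_decomp: "decomp e E e0 \<Longrightarrow> plug E e0 = e"
  by (induction rule: decomp.induct) auto

lemma is_val_strip: "is_val v \<Longrightarrow> is_val (strip v)"
  by (cases v) auto

lemma strip_lift: "strip (lift u k) = lift (strip u) k"
  by (induction u arbitrary: k) auto

lemma strip_subst: "strip (subst t k u) = subst (strip t) k (strip u)"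
  by (induction t arbitrary: k u) (auto simp: strip_lift)

lemma decomp_strip:
  "decomp e E e0 \<Longrightarrow> \<not> strippable e0 \<Longrightarrow> decomp (strip e) (strip_ctx E) (strip e0)"
  by (induction rule: decomp.induct) (auto intro: decomp.intros simp: is_val_strip)

lemma instr_step_strip:
  "instr_step e0 et \<Longrightarrow> \<not> strippable e0 \<Longrightarrow> instr_step (strip e0) (strip et)"
proof (induction rule: instr_step.induct)
  case (s_beta v e)
  show ?case
    using instr_step.s_beta[OF is_val_strip[OF s_beta(1)]] by (simp add: strip_subst)
next
  case (s_plus n1 n2)
  show ?case by (simp add: instr_step.s_plus)
next
  case (s_fix e)
  show ?case using instr_step.s_fix[of "strip e"] by (simp add: strip_subst)
qed auto

lemma strip_instr_step_strippable:
  "instr_step e0 et \<Longrightarrow> strippable e0 \<Longrightarrow> strip et = strip e0"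
  by (induction rule: instr_step.induct) auto

lemma ustep_strip_plug:
  assumes "decomp e E e0" and "instr_step e0 et" and "\<not> strippable e0"
  shows "ustep (strip e) (strip (plug E et))"
  unfolding ustep_def strip_plug
  using decomp_strip[OF assms(1,3)] instr_step_strip[OF assms(2,3)] by blast

lemma ustep_rtranclp_strip_filtered_step:
  assumes instr: "instr AnyE Step One 0 e ei"
    and decomp: "decomp ei E0 e0"
    and step: "instr_step e0 et"
  shows "ustep\<^sup>*\<^sup>* (strip e) (strip (plug (decay E0) et))"
proof -
  have strip_e: "strip e = strip ei"
    using strip_instr[OF instr] by simp
  have strip_e1: "strip (plug (decay E0) et) = strip (plug E0 et)"
    by (rule strip_plug_decay)
  show ?thesis
  proof (cases "strippable e0")
    case True
    then have "strip (plug E0 et) = strip ei"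
      using strip_instr_step_strippable[OF step] plug_decomp[OF decomp]
      by (metis strip_plug)
    then show ?thesis using strip_e strip_e1 by simp
  next
    case False
    then show ?thesis
      using ustep_strip_plug[OF decomp step] strip_e strip_e1 by auto
  qed
qed

lemma fstep_simulation: "fstep e n e' \<Longrightarrow> ustep\<^sup>*\<^sup>* (strip e) (strip e')"
proof (induction rule: fstep.induct)
  case (f_val v)
  show ?case by simp
next
  case (f_step e ei E0 e0 et e1)
  then show ?case using ustep_rtranclp_strip_filtered_step by blast
next
  case (f_skip e ei E0 e0 et e1 n e2)
  then show ?case
    using ustep_rtranclp_strip_filtered_step[OF f_skip(1-3)] by (meson rtranclp_trans)
next
  case (f_strip e ei E0 e0 et e1 n e2)
  then show ?case
    using ustep_rtranclp_strip_filtered_step[OF f_strip(1-3)] by (meson rtranclp_trans)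
qed

theorem theorem4:
  assumes "is_expr e" and "is_expr e'"
    and "fstep e n e'"
  shows "ustep\<^sup>*\<^sup>* (strip e) (strip e')"
  using fstep_simulation[OF assms(3)] .

end
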